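(* Let $0\le k\le n$ be integers and let $H\le\mathrm{Sym}_n$ be the stabiliser of a $k$-element subset of $\{1,\dots,n\}$, so $H\cong\mathrm{Sym}_k\times\mathrm{Sym}_{n-k}$. Then for every subgroup $G\le\mathrm{Sym}_n$, \[ |Z_{\mathrm{Sym}_n}(G)|\le 2^n|Z_H(G)| . \] In addition, let $u:\mathbb N\to\mathbb R$ be a function such that $u(m)^{-1}|K|^{1/2}\le|K[2]|\le u(m)|K|^{1/2}$ for every $m$ and every $K\le\mathrm{Sym}_m$. Then \[ |Z_{\mathrm{Sym}_n}(G)[2]|\le 2^n u(n)^2\,|Z_H(G)[2]| . \]
   Context: $Z_X(G)$ denotes the centraliser of $G$ in $X$, i.e. the elements of $X$ commuting with every element of $G$. For a group $K$, $K[2]=\{g\in K:g^2=1\}$ (including the identity). A function $u$ as in the hypothesis exists with $\log u(n)=O(n\log\log n)$. *)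

theory Defs
  imports "HOL-Algebra.Sym_Groups" Complex_Main
begin

definition centraliser :: "nat \<Rightarrow> (nat \<Rightarrow> nat) set \<Rightarrow> (nat \<Rightarrow> nat) set \<Rightarrow> (nat \<Rightarrow> nat) set" where
  "centraliser n X G = {x \<in> X. \<forall>g\<in>G. x \<otimes>\<^bsub>sym_group n\<^esub> g = g \<otimes>\<^bsub>sym_group n\<^esub> x}"

definition involset :: "nat \<Rightarrow> (nat \<Rightarrow> nat) set \<Rightarrow> (nat \<Rightarrow> nat) set" where
  "involset n K = {g \<in> K. g \<otimes>\<^bsub>sym_group n\<^esub> g = \<one>\<^bsub>sym_group n\<^esub>}"

definition setstab :: "nat \<Rightarrow> nat set \<Rightarrow> (nat \<Rightarrow> nat) set" where
  "setstab n S = {p \<in> carrier (sym_group n). p ` S = S}"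

end

theory Submission
  imports Defs
begin

text \<open>The centraliser \<open>Z\<close> of \<open>G\<close> in \<open>Sym\<^sub>n\<close> acts on the subsets of \<open>{1..n}\<close> by
  images, and the stabiliser of \<open>S\<close> in \<open>Z\<close> is \<open>Z\<^sub>H(G) = Z \<inter> Stab(S)\<close>. Each fibre of
  \<open>z \<mapsto> z ` S\<close> on \<open>Z\<close> is a left coset of this stabiliser, and there are at most \<open>2\<^sup>n\<close>
  subsets, so \<open>|Z| \<le> 2\<^sup>n |Z\<^sub>H(G)|\<close>. As both centralisers are subgroups, the hypothesis on
  \<open>u\<close> then gives \<open>|Z[2]| \<le> u |Z|\<^sup>1\<^sup>/\<^sup>2 \<le> u 2\<^sup>n\<^sup>/\<^sup>2 |Z\<^sub>H(G)|\<^sup>1\<^sup>/\<^sup>2 \<le> u\<^sup>2 2\<^sup>n\<^sup>/\<^sup>2 |Z\<^sub>H(G)[2]|\<close>.\<close>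

lemma subgroup_centraliser_sym_group:
  "subgroup (centraliser n (carrier (sym_group n)) G) (sym_group n)"
proof (rule group.subgroupI[OF sym_group_is_group])
  show "centraliser n (carrier (sym_group n)) G \<subseteq> carrier (sym_group n)"
    by (auto simp: centraliser_def)
  show "centraliser n (carrier (sym_group n)) G \<noteq> {}"
  proof -
    have "id \<in> centraliser n (carrier (sym_group n)) G"
      by (simp add: centraliser_def sym_group_carrier sym_group_mult)
    then show ?thesis by blast
  qed
next
  fix a assume "a \<in> centraliser n (carrier (sym_group n)) G"
  then have a: "a permutes {1..n}" and comm: "\<And>g. g \<in> G \<Longrightarrow> a \<circ> g = g \<circ> a"
    by (auto simp: centraliser_def sym_group_carrier sym_group_mult)
  have "inv' a \<circ> g = g \<circ> inv' a" if "g \<in> G" for g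
  proof -
    have "inv' a \<circ> g = inv' a \<circ> (g \<circ> a) \<circ> inv' a"
      by (simp add: comp_assoc permutes_inv_o[OF a])
    also have "\<dots> = g \<circ> inv' a"
      by (simp add: comm[OF that, symmetric] comp_assoc[symmetric] permutes_inv_o[OF a])
    finally show ?thesis .
  qed
  then show "inv\<^bsub>sym_group n\<^esub> a \<in> centraliser n (carrier (sym_group n)) G"
    using a by (simp add: centraliser_def sym_group_carrier sym_group_mult permutes_inv)
next
  fix a b
  assume "a \<in> centraliser n (carrier (sym_group n)) G" "b \<in> centraliser n (carrier (sym_group n)) G"
  then have ab: "a permutes {1..n}" "b permutes {1..n}"
    and comm: "\<And>g. g \<in> G \<Longrightarrow> a \<circ> g = g \<circ> a" "\<And>g. g \<in> G \<Longrightarrow> b \<circ> g = g \<circ> b"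
    by (auto simp: centraliser_def sym_group_carrier sym_group_mult)
  have "(a \<circ> b) \<circ> g = g \<circ> (a \<circ> b)" if "g \<in> G" for g
  proof -
    have "(a \<circ> b) \<circ> g = a \<circ> (g \<circ> b)"
      by (simp add: comp_assoc comm(2)[OF that])
    also have "\<dots> = g \<circ> (a \<circ> b)"
      by (simp add: comp_assoc[symmetric] comm(1)[OF that])
    finally show ?thesis .
  qed
  then show "a \<otimes>\<^bsub>sym_group n\<^esub> b \<in> centraliser n (carrier (sym_group n)) G"
    using ab by (simp add: centraliser_def sym_group_carrier sym_group_mult permutes_compose)
qed

lemma subgroup_setstab: "subgroup (setstab n S) (sym_group n)"
proof (rule group.subgroupI[OF sym_group_is_group])
  show "setstab n S \<subseteq> carrier (sym_group n)"
    by (auto simp: setstab_def)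
  show "setstab n S \<noteq> {}"
  proof -
    have "id \<in> setstab n S"
      by (simp add: setstab_def sym_group_carrier)
    then show ?thesis by blast
  qed
next
  fix a assume "a \<in> setstab n S"
  then have a: "a permutes {1..n}" and aS: "a ` S = S"
    by (auto simp: setstab_def sym_group_carrier)
  have "inv' a ` S = S"
    using image_inv_f_f[OF permutes_inj[OF a], of S] by (simp add: aS)
  then show "inv\<^bsub>sym_group n\<^esub> a \<in> setstab n S"
    using a by (simp add: setstab_def sym_group_carrier permutes_inv)
next
  fix a b assume "a \<in> setstab n S" "b \<in> setstab n S"
  then have "a permutes {1..n}" "b permutes {1..n}" "a ` b ` S = S"
    by (auto simp: setstab_def sym_group_carrier)
  then show "a \<otimes>\<^bsub>sym_group n\<^esub> b \<in> setstab n S"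
    by (simp add: setstab_def sym_group_carrier sym_group_mult permutes_compose image_comp)
qed

lemma centraliser_setstab:
  "centraliser n (setstab n S) G = centraliser n (carrier (sym_group n)) G \<inter> setstab n S"
  by (auto simp: centraliser_def setstab_def)

lemma finite_carrier_sym_group: "finite (carrier (sym_group n))"
  by (simp add: sym_group_def finite_permutations)

lemma card_fibre_image_le_card_stabiliser:
  assumes Z: "subgroup Z (sym_group n)"
  shows "card ((\<lambda>z. z ` S) -` {T} \<inter> Z) \<le> card (Z \<inter> setstab n S)"
proof (cases "(\<lambda>z. z ` S) -` {T} \<inter> Z = {}")
  case False
  then obtain z0 where z0: "z0 \<in> Z" "z0 ` S = T" by blast
  have p: "z0 permutes {1..n}"
    using z0(1) subgroup.subset[OF Z] by (auto simp: sym_group_carrier)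
  have "inj_on (\<lambda>z. inv' z0 \<circ> z) ((\<lambda>z. z ` S) -` {T} \<inter> Z)"
  proof (rule inj_onI)
    have cancel: "z0 \<circ> (inv' z0 \<circ> z) = z" for z :: "nat \<Rightarrow> nat"
      by (simp add: comp_assoc[symmetric] permutes_inv_o(1)[OF p])
    fix x y :: "nat \<Rightarrow> nat" assume "inv' z0 \<circ> x = inv' z0 \<circ> y"
    then show "x = y"
      by (metis cancel)
  qed
  moreover have "inv' z0 \<circ> z \<in> Z \<inter> setstab n S" if "z \<in> Z" "z ` S = T" for z
  proof -
    have "(inv' z0 \<circ> z) ` S = inv' z0 ` z0 ` S"
      by (simp only: image_comp[symmetric] that(2) z0(2))
    also have "\<dots> = S"
      by (rule image_inv_f_f[OF permutes_inj[OF p]])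
    moreover have "inv\<^bsub>sym_group n\<^esub> z0 \<otimes>\<^bsub>sym_group n\<^esub> z \<in> Z"
      using Z z0(1) that(1) by (simp add: subgroup.m_closed subgroup.m_inv_closed del: sym_group_inv_equality)
    then have "inv' z0 \<circ> z \<in> Z"
      using z0(1) subgroup.subset[OF Z] by (auto simp: sym_group_mult)
    ultimately show ?thesis
      using subgroup.subset[OF Z] by (auto simp: setstab_def)
  qed
  moreover have "finite (Z \<inter> setstab n S)"
    using subgroup.subset[OF Z] finite_carrier_sym_group by (meson finite_Int finite_subset)
  ultimately show ?thesis
    by (intro card_inj_on_le) auto
qed simp

lemma card_subgroup_le_pow2_card_inter_setstab:
  assumes Z: "subgroup Z (sym_group n)" and S: "S \<subseteq> {1..n}"
  shows "card Z \<le> 2 ^ n * card (Z \<inter> setstab n S)"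
proof -
  have "finite Z"
    using subgroup.subset[OF Z] finite_carrier_sym_group finite_subset by blast
  have "z ` S \<in> Pow {1..n}" if "z \<in> Z" for z
  proof -
    have "z permutes {1..n}"
      using that subgroup.subset[OF Z] by (auto simp: sym_group_carrier)
    then show ?thesis
      using S permutes_image by fastforce
  qed
  then obtain T where "card Z \<le> card ((\<lambda>z. z ` S) -` {T} \<inter> Z) * card (Pow {1..n :: nat})"
    using pigeonhole_card[of "\<lambda>z. z ` S" Z "Pow {1..n}"] \<open>finite Z\<close> by auto
  also have "\<dots> \<le> card (Z \<inter> setstab n S) * 2 ^ n"
    using card_fibre_image_le_card_stabiliser[OF Z] by (simp add: card_Pow)
  finally show ?thesis
    by (simp add: mult.commute)
qed

lemma le_mult_power2_of_sqrt_bounds: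
  fixes a b c u x y :: real
  assumes "a \<le> c * b" and "1 \<le> c" and "0 \<le> a" and "0 \<le> y"
    and x: "x \<le> u * sqrt a" and y: "inverse u * sqrt b \<le> y"
  shows "x \<le> c * u\<^sup>2 * y"
proof (cases "u > 0")
  case True
  have "sqrt c * 1 \<le> sqrt c * sqrt c"
    using \<open>1 \<le> c\<close> by (intro mult_left_mono) auto
  then have "sqrt c \<le> c"
    using \<open>1 \<le> c\<close> by simp
  have "sqrt a \<le> sqrt c * sqrt b"
    using \<open>a \<le> c * b\<close> by (simp flip: real_sqrt_mult)
  also have "\<dots> \<le> sqrt c * (u * y)"
    using y True \<open>1 \<le> c\<close> by (intro mult_left_mono) (auto simp: field_simps)
  finally have "x \<le> u * (sqrt c * (u * y))"
    using x True by (smt (verit) mult_left_mono)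
  also have "\<dots> = sqrt c * u\<^sup>2 * y"
    by (simp add: power2_eq_square)
  also have "\<dots> \<le> c * u\<^sup>2 * y"
    using \<open>sqrt c \<le> c\<close> \<open>0 \<le> y\<close> by (intro mult_right_mono) auto
  finally show ?thesis .
next
  case False
  then have "x \<le> 0"
    using x \<open>0 \<le> a\<close> by (smt (verit) mult_nonpos_nonneg real_sqrt_ge_zero)
  also have "0 \<le> c * u\<^sup>2 * y"
    using \<open>1 \<le> c\<close> \<open>0 \<le> y\<close> by simp
  finally show ?thesis .
qed

theorem lemmaA3:
  fixes n k :: nat and S :: "nat set" and G :: "(nat \<Rightarrow> nat) set"
  assumes "k \<le> n"
    and "S \<subseteq> {1..n}" and "card S = k"
    and "subgroup G (sym_group n)"
  shows "real (card (centraliser n (carrier (sym_group n)) G))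
           \<le> 2 ^ n * real (card (centraliser n (setstab n S) G))
       \<and> (\<forall>u :: nat \<Rightarrow> real.
            (\<forall>m K. subgroup K (sym_group m) \<longrightarrow>
               inverse (u m) * sqrt (real (card K)) \<le> real (card (involset m K))
             \<and> real (card (involset m K)) \<le> u m * sqrt (real (card K)))
          \<longrightarrow> real (card (involset n (centraliser n (carrier (sym_group n)) G)))
               \<le> 2 ^ n * (u n)^2 * real (card (involset n (centraliser n (setstab n S) G))))"
proof -
  define Z where "Z = centraliser n (carrier (sym_group n)) G"
  have Z: "subgroup Z (sym_group n)"
    unfolding Z_def by (rule subgroup_centraliser_sym_group)
  have ZH: "subgroup (Z \<inter> setstab n S) (sym_group n)"
    using Z subgroup_setstab by (rule group.subgroups_Inter_pair[OF sym_group_is_group])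
  have "real (card Z) \<le> real (2 ^ n * card (Z \<inter> setstab n S))"
    using card_subgroup_le_pow2_card_inter_setstab[OF Z assms(2)] by (rule of_nat_mono)
  then have card: "real (card Z) \<le> 2 ^ n * real (card (Z \<inter> setstab n S))"
    by simp
  show ?thesis
    unfolding centraliser_setstab Z_def[symmetric]
  proof (intro conjI allI impI)
    show "real (card Z) \<le> 2 ^ n * real (card (Z \<inter> setstab n S))"
      by (rule card)
    fix u :: "nat \<Rightarrow> real"
    assume bounds: "\<forall>m K. subgroup K (sym_group m) \<longrightarrow>
               inverse (u m) * sqrt (real (card K)) \<le> real (card (involset m K))
             \<and> real (card (involset m K)) \<le> u m * sqrt (real (card K))"
    show "real (card (involset n Z)) \<le> 2 ^ n * (u n)\<^sup>2 * real (card (involset n (Z \<inter> setstab n S)))"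
      using bounds[rule_format, OF Z] bounds[rule_format, OF ZH]
      by (intro le_mult_power2_of_sqrt_bounds[OF card]) auto
  qed
qed

end
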